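(* Let $f,g\in C[0,1]$ be real-valued continuous functions and let $f\cdot g$ denote their pointwise product. Then $$\overline{\dim}_B G(f\cdot g)\le \max\{\overline{\dim}_B G(f),\ \overline{\dim}_B G(g)\}.$$
   Context: $C[0,1]$ is the space of real-valued continuous functions on $[0,1]$. For $f\in C[0,1]$, the graph is $G(f)=\{(x,f(x)):x\in[0,1]\}\subset\mathbb{R}^2$. For a nonempty bounded set $F$, $N_\delta(F)$ is the smallest number of sets of diameter at most $\delta$ covering $F$, and the upper and lower box-counting dimensions are $\overline{\dim}_B F=\limsup_{\delta\to0}\frac{\log N_\delta(F)}{-\log\delta}$ and $\underline{\dim}_B F=\liminf_{\delta\to0}\frac{\log N_\delta(F)}{-\log\delta}$. *)

theory Defs
  imports "HOL-Analysis.Analysis"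
begin

definition graph01 :: "(real \<Rightarrow> real) \<Rightarrow> (real \<times> real) set" where
  "graph01 f = {(x, f x) | x. x \<in> {0..1}}"

text \<open>N_delta(F): smallest number of sets of diameter at most delta covering F.
  Boundedness of each covering set is required so that the library's diameter is meaningful.\<close>
definition cover_number :: "real \<Rightarrow> ('a::metric_space) set \<Rightarrow> nat" where
  "cover_number \<delta> F = (LEAST n. \<exists>C. finite C \<and> card C = n \<and>
      (\<forall>S\<in>C. bounded S \<and> diameter S \<le> \<delta>) \<and> F \<subseteq> \<Union>C)"

definition upper_box_dim :: "('a::metric_space) set \<Rightarrow> ereal" where
  "upper_box_dim F = Limsup (at_right 0)
      (\<lambda>\<delta>. ereal (ln (real (cover_number \<delta> F)) / (- ln \<delta>)))"

end

theory Submission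
  imports Defs
begin

text \<open>Cut [0,1] into columns of width h = \<delta>/2. Up to constants, the covering number
  N(\<delta>, G \<phi>) is the number of columns plus the total oscillation of \<phi> over the columns divided
  by \<delta>: the graph over a column of oscillation \<omega> is covered by \<lceil>\<omega>/h\<rceil> + 1 squares of side h,
  and conversely a set of diameter \<delta> meets at most six columns and covers a range of values of
  length at most 2\<delta> in each. On a column, the oscillation of f g is at most
  sup |g| osc f + sup |f| osc g, hence N(\<delta>, G(f g)) \<le> D max (N(\<delta>, G f), N(\<delta>, G g)) with D
  independent of \<delta>, and D disappears from the upper box dimension after dividing ln D by
  -ln \<delta>.\<close>

definition delta_cover :: "real \<Rightarrow> ('a::metric_space) set \<Rightarrow> 'a set set \<Rightarrow> bool" where
  "delta_cover \<delta> F C \<longleftrightarrow> finite C \<and> (\<forall>S\<in>C. bounded S \<and> diameter S \<le> \<delta>) \<and> F \<subseteq> \<Union>C"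

lemma cover_number_eq_Least:
  "cover_number \<delta> F = (LEAST n. \<exists>C. delta_cover \<delta> F C \<and> card C = n)"
  unfolding cover_number_def delta_cover_def by meson

lemma cover_number_le_card:
  assumes "delta_cover \<delta> F C"
  shows "cover_number \<delta> F \<le> card C"
  unfolding cover_number_eq_Least using assms by (auto intro: Least_le)

lemma delta_cover_card_cover_number:
  assumes "delta_cover \<delta> F C"
  obtains C' where "delta_cover \<delta> F C'" "card C' = cover_number \<delta> F"
  using LeastI[of "\<lambda>n. \<exists>C. delta_cover \<delta> F C \<and> card C = n" "card C"] assms
  unfolding cover_number_eq_Least by blast

lemma delta_cover_dist_le:
  assumes "delta_cover \<delta> F C" "S \<in> C" "x \<in> S" "y \<in> S"
  shows "dist x y \<le> \<delta>"
  using assms diameter_bounded_bound[of S x y] unfolding delta_cover_def by fastforce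

lemma bounded_diameter_square:
  fixes a b h :: real
  assumes "0 \<le> h"
  shows "bounded ({a..a+h} \<times> {b..b+h})" and "diameter ({a..a+h} \<times> {b..b+h}) \<le> 2 * h"
proof -
  show "bounded ({a..a+h} \<times> {b..b+h})"
    by (intro compact_imp_bounded compact_Times) auto
  show "diameter ({a..a+h} \<times> {b..b+h}) \<le> 2 * h"
  proof (rule diameter_le)
    fix p q assume pq: "p \<in> {a..a+h} \<times> {b..b+h}" "q \<in> {a..a+h} \<times> {b..b+h}"
    obtain x y x' y' where p: "p = (x, y)" and q: "q = (x', y')" by fastforce
    have "\<bar>x - x'\<bar> \<le> h" "\<bar>y - y'\<bar> \<le> h" using pq unfolding p q by auto
    moreover have "norm (p - q) \<le> \<bar>x - x'\<bar> + \<bar>y - y'\<bar>"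
      using norm_Pair_le[of "x - x'" "y - y'"] unfolding p q by simp
    ultimately show "norm (p - q) \<le> 2 * h" by linarith
  qed (use assms in simp)
qed

lemma Icc_length_le_card_cover:
  fixes T :: "real set set"
  assumes "finite T" "{a..b} \<subseteq> \<Union>T" "0 \<le> \<delta>"
    and small: "\<And>S x y. S \<in> T \<Longrightarrow> x \<in> S \<Longrightarrow> y \<in> S \<Longrightarrow> dist x y \<le> \<delta>"
  shows "b - a \<le> 2 * \<delta> * real (card T)"
proof (cases "a \<le> b")
  case False
  then show ?thesis using assms(3) by (simp add: order_trans[OF _ zero_le_mult_iff[THEN iffD2]])
next
  case True
  have "\<exists>c. S \<subseteq> cball c \<delta>" if "S \<in> T" for S
  proof (cases "S = {}")
    case False
    then obtain c where "c \<in> S" by auto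
    then show ?thesis using small[OF that \<open>c \<in> S\<close>] by (intro exI[of _ c]) auto
  qed simp
  then obtain c where c: "\<And>S. S \<in> T \<Longrightarrow> S \<subseteq> cball (c S) \<delta>" by metis
  have "ennreal (b - a) = emeasure lborel {a..b}" using True by simp
  also have "\<dots> \<le> emeasure lborel (\<Union>S\<in>T. cball (c S) \<delta>)"
  proof (rule emeasure_mono)
    show "{a..b} \<subseteq> (\<Union>S\<in>T. cball (c S) \<delta>)" using assms(2) c by blast
  qed (auto intro!: borel_closed simp: assms(1))
  also have "\<dots> \<le> (\<Sum>S\<in>T. emeasure lborel (cball (c S) \<delta>))"
    by (rule emeasure_subadditive_finite) (auto simp: assms(1))
  also have "\<dots> = ennreal (2 * \<delta> * real (card T))"
    using assms(3) by (simp add: cball_eq_atLeastAtMost ennreal_of_nat_eq_real_of_nat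
        ennreal_mult[symmetric] mult.commute)
  finally show ?thesis using assms(3) by (subst (asm) ennreal_le_iff) auto
qed

lemma sum_card_filter_swap:
  fixes A :: "'a set" and B :: "'b set" and R :: "'a \<Rightarrow> 'b \<Rightarrow> bool"
  assumes "finite A" "finite B"
  shows "(\<Sum>a\<in>A. card {b\<in>B. R a b}) = (\<Sum>b\<in>B. card {a\<in>A. R a b})"
  using sum.swap[where g="\<lambda>a b. if R a b then 1 else 0 :: nat" and A=A and B=B]
  by (simp add: sum.If_cases assms Int_def conj_commute)

definition column :: "real \<Rightarrow> nat \<Rightarrow> real set" where
  "column h k = {real k * h .. min (real (Suc k) * h) 1}"

definition num_columns :: "real \<Rightarrow> nat" where
  "num_columns h = nat \<lceil>1 / h\<rceil>"

definition column_min :: "(real \<Rightarrow> real) \<Rightarrow> real \<Rightarrow> nat \<Rightarrow> real" where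
  "column_min \<phi> h k = Inf (\<phi> ` column h k)"

definition column_max :: "(real \<Rightarrow> real) \<Rightarrow> real \<Rightarrow> nat \<Rightarrow> real" where
  "column_max \<phi> h k = Sup (\<phi> ` column h k)"

definition column_osc :: "(real \<Rightarrow> real) \<Rightarrow> real \<Rightarrow> nat \<Rightarrow> real" where
  "column_osc \<phi> h k = column_max \<phi> h k - column_min \<phi> h k"

lemma left_end_in_column:
  assumes "0 < h" "k < num_columns h"
  shows "real k * h \<in> column h k"
proof -
  have "real k < 1 / h" using assms unfolding num_columns_def by linarith
  then have "real k * h < 1" using assms by (simp add: field_simps)
  then show ?thesis using assms by (auto simp: column_def algebra_simps)
qed

lemma column_subset_unit_interval:
  assumes "0 < h"
  shows "column h k \<subseteq> {0..1}"
  using assms by (auto simp: column_def)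

lemma ex_column:
  assumes "0 < h" "x \<in> {0..1}"
  obtains k where "k < num_columns h" "x \<in> column h k"
proof -
  define n where "n = num_columns h"
  have "1 / h \<le> real n" unfolding n_def num_columns_def by linarith
  then have n: "1 \<le> real n * h" using assms by (simp add: field_simps)
  then have "0 < n" by (cases n) auto
  define m where "m = nat \<lfloor>x / h\<rfloor>"
  have "real m \<le> x / h" "x / h < real m + 1"
    using assms unfolding m_def by (simp_all add: zero_le_divide_iff)
  then have m: "real m * h \<le> x" "x < real (Suc m) * h"
    using assms by (simp_all add: field_simps)
  define k where "k = min m (n - 1)"
  have "real k * h \<le> real m * h"
    using assms(1) by (intro mult_right_mono) (simp_all add: k_def)
  then have "real k * h \<le> x" using m(1) by linarith
  moreover have "x \<le> real (Suc k) * h"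
  proof (cases "m \<le> n - 1")
    case False
    then have "real (Suc k) = real n" using \<open>0 < n\<close> by (simp add: k_def)
    then show ?thesis using n assms by simp
  qed (use m in \<open>simp add: k_def\<close>)
  moreover have "k < n" using \<open>0 < n\<close> by (simp add: k_def)
  ultimately show thesis using that assms unfolding n_def column_def by auto
qed

lemma image_column:
  assumes "continuous_on {0..1} \<phi>" "0 < h" "k < num_columns h"
  shows "\<phi> ` column h k = {column_min \<phi> h k .. column_max \<phi> h k}"
    and "column_min \<phi> h k \<le> column_max \<phi> h k"
proof -
  have "real k * h \<le> min (real (Suc k) * h) 1"
    using left_end_in_column[OF assms(2,3)] by (simp add: column_def)
  moreover have "continuous_on (column h k) \<phi>"
    using continuous_on_subset[OF assms(1) column_subset_unit_interval[OF assms(2)]] .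
  ultimately obtain c d where "\<phi> ` column h k = {c..d}" "c \<le> d"
    using continuous_image_closed_interval unfolding column_def by metis
  then show "\<phi> ` column h k = {column_min \<phi> h k .. column_max \<phi> h k}"
    and "column_min \<phi> h k \<le> column_max \<phi> h k"
    by (simp_all add: column_min_def column_max_def)
qed

lemma column_bounds:
  assumes "continuous_on {0..1} \<phi>" "0 < h" "k < num_columns h" "x \<in> column h k"
  shows "column_min \<phi> h k \<le> \<phi> x" "\<phi> x \<le> column_max \<phi> h k"
  using image_column(1)[OF assms(1-3)] assms(4) by auto

lemma graph_column_cover:
  assumes cont: "continuous_on {0..1} \<phi>" and "0 < \<delta>"
  defines "h \<equiv> \<delta> / 2"
  shows "\<exists>C. delta_cover \<delta> (graph01 \<phi>) C
    \<and> card C \<le> (\<Sum>k<num_columns h. nat \<lceil>column_osc \<phi> h k / h\<rceil> + 1)"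
proof -
  have h: "0 < h" using \<open>0 < \<delta>\<close> by (simp add: h_def)
  define n where "n k = nat \<lceil>column_osc \<phi> h k / h\<rceil>" for k
  define B where "B k j = {real k * h .. real k * h + h}
    \<times> {column_min \<phi> h k + real j * h .. column_min \<phi> h k + real j * h + h}" for k j
  define C where "C = (\<Union>k<num_columns h. B k ` {..n k})"
  have "card C \<le> (\<Sum>k<num_columns h. card (B k ` {..n k}))"
    unfolding C_def by (rule card_UN_le) simp
  also have "\<dots> \<le> (\<Sum>k<num_columns h. n k + 1)"
    by (intro sum_mono) (metis card_atMost card_image_le finite_atMost Suc_eq_plus1)
  finally have card: "card C \<le> (\<Sum>k<num_columns h. n k + 1)" .
  have "graph01 \<phi> \<subseteq> \<Union>C"
  proof
    fix p assume "p \<in> graph01 \<phi>"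
    then obtain x where x: "x \<in> {0..1}" and p: "p = (x, \<phi> x)" by (auto simp: graph01_def)
    obtain k where k: "k < num_columns h" "x \<in> column h k" using ex_column[OF h x] by blast
    note bounds = column_bounds[OF cont h k]
    define j where "j = nat \<lfloor>(\<phi> x - column_min \<phi> h k) / h\<rfloor>"
    have "real j \<le> (\<phi> x - column_min \<phi> h k) / h" "(\<phi> x - column_min \<phi> h k) / h < real j + 1"
      using bounds h unfolding j_def by (simp_all add: zero_le_divide_iff)
    then have "p \<in> B k j"
      using k(2) h unfolding p B_def by (auto simp: column_def field_simps)
    moreover have "j \<le> n k"
      using bounds h unfolding j_def n_def column_osc_def
      by (intro nat_mono order_trans[OF floor_le_ceiling] ceiling_mono divide_right_mono) auto
    ultimately show "p \<in> \<Union>C" using k(1) unfolding C_def by auto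
  qed
  moreover have "bounded S \<and> diameter S \<le> \<delta>" if "S \<in> C" for S
    using that bounded_diameter_square[of h] h unfolding C_def B_def h_def by auto
  ultimately have "delta_cover \<delta> (graph01 \<phi>) C"
    unfolding delta_cover_def C_def by auto
  with card show ?thesis unfolding n_def by blast
qed

definition sets_meeting_column ::
    "(real \<times> real) set set \<Rightarrow> (real \<Rightarrow> real) \<Rightarrow> real \<Rightarrow> nat \<Rightarrow> (real \<times> real) set set" where
  "sets_meeting_column C \<phi> h k = {S\<in>C. \<exists>x\<in>column h k. (x, \<phi> x) \<in> S}"

lemma card_sets_meeting_column_pos:
  assumes "delta_cover \<delta> (graph01 \<phi>) C" "0 < h" "k < num_columns h"
  shows "0 < card (sets_meeting_column C \<phi> h k)"
proof -
  have x: "real k * h \<in> column h k" using left_end_in_column[OF assms(2,3)] .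
  then have "(real k * h, \<phi> (real k * h)) \<in> graph01 \<phi>"
    using column_subset_unit_interval[OF assms(2)] unfolding graph01_def by blast
  then obtain S where "S \<in> C" "(real k * h, \<phi> (real k * h)) \<in> S"
    using assms(1) unfolding delta_cover_def by blast
  then have "S \<in> sets_meeting_column C \<phi> h k" using x unfolding sets_meeting_column_def by blast
  moreover have "finite (sets_meeting_column C \<phi> h k)"
    using assms(1) unfolding delta_cover_def sets_meeting_column_def by auto
  ultimately show ?thesis by (auto simp: card_gt_0_iff)
qed

lemma column_osc_le_card_sets_meeting_column:
  assumes cont: "continuous_on {0..1} \<phi>" and cover: "delta_cover \<delta> (graph01 \<phi>) C"
    and "0 < \<delta>" "0 < h" "k < num_columns h"
  shows "column_osc \<phi> h k \<le> 2 * \<delta> * real (card (sets_meeting_column C \<phi> h k))"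
proof -
  let ?M = "sets_meeting_column C \<phi> h k"
  let ?T = "(\<lambda>S. snd ` S) ` ?M"
  have fin: "finite ?M" using cover unfolding delta_cover_def sets_meeting_column_def by auto
  have "{column_min \<phi> h k .. column_max \<phi> h k} \<subseteq> \<Union>?T"
  proof
    fix y assume "y \<in> {column_min \<phi> h k .. column_max \<phi> h k}"
    then obtain x where x: "x \<in> column h k" "y = \<phi> x"
      using image_column(1)[OF cont assms(4,5)] by blast
    then have "(x, \<phi> x) \<in> graph01 \<phi>"
      using column_subset_unit_interval[OF assms(4)] unfolding graph01_def by blast
    then obtain S where "S \<in> C" "(x, \<phi> x) \<in> S" using cover unfolding delta_cover_def by blast
    then show "y \<in> \<Union>?T" using x unfolding sets_meeting_column_def by force
  qed
  moreover have "dist u v \<le> \<delta>" if uv: "S' \<in> ?T" "u \<in> S'" "v \<in> S'" for S' u v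
  proof -
    obtain S p q where "S \<in> C" "p \<in> S" "q \<in> S" "u = snd p" "v = snd q"
      using uv unfolding sets_meeting_column_def by blast
    then show ?thesis
      using delta_cover_dist_le[OF cover] dist_snd_le[of p q] by (metis order_trans)
  qed
  ultimately have "column_osc \<phi> h k \<le> 2 * \<delta> * real (card ?T)"
    unfolding column_osc_def using \<open>0 < \<delta>\<close> fin by (intro Icc_length_le_card_cover) auto
  also have "\<dots> \<le> 2 * \<delta> * real (card ?M)"
    using \<open>0 < \<delta>\<close> fin by (intro mult_left_mono) (auto intro: card_image_le)
  finally show ?thesis .
qed

lemma card_columns_meeting_le_6:
  fixes X :: "real set"
  assumes "0 < h" and small: "\<forall>x\<in>X. \<forall>y\<in>X. dist x y \<le> 2 * h"
  shows "finite {k. column h k \<inter> X \<noteq> {}}" and "card {k. column h k \<inter> X \<noteq> {}} \<le> 6"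
proof -
  have "\<exists>m. {k. column h k \<inter> X \<noteq> {}} \<subseteq> {m..<m+6}"
  proof (cases "X = {}")
    case False
    then obtain q where q: "q \<in> X" by auto
    define m where "m = nat \<lceil>q / h - 3\<rceil>"
    have "k \<in> {m..<m+6}" if meets: "column h k \<inter> X \<noteq> {}" for k
    proof -
      obtain x where x: "x \<in> column h k" "x \<in> X" using meets by blast
      have "\<bar>x - q\<bar> \<le> 2 * h" using small x(2) q by (simp add: dist_real_def)
      moreover have "real k * h \<le> x" "x \<le> real (Suc k) * h" using x(1) by (auto simp: column_def)
      ultimately have "q / h - 3 \<le> real k" "real k \<le> q / h + 2"
        using assms(1) by (simp_all add: field_simps)
      moreover have "q / h - 3 \<le> real m" unfolding m_def by linarith
      moreover have "\<lceil>q / h - 3\<rceil> \<le> int k" using \<open>q / h - 3 \<le> real k\<close> by (intro ceiling_le) simp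
      then have "m \<le> k" by (simp only: m_def nat_le_iff)
      ultimately show ?thesis by simp
    qed
    then show ?thesis by blast
  qed simp
  then obtain m where m: "{k. column h k \<inter> X \<noteq> {}} \<subseteq> {m..<m+6}" by blast
  show "finite {k. column h k \<inter> X \<noteq> {}}" using finite_subset[OF m] by simp
  show "card {k. column h k \<inter> X \<noteq> {}} \<le> 6" using card_mono[OF _ m] by simp
qed

lemma sum_card_sets_meeting_column_le:
  assumes cover: "delta_cover (2 * h) (graph01 \<phi>) C" and "0 < h"
  shows "(\<Sum>k<num_columns h. card (sets_meeting_column C \<phi> h k)) \<le> 6 * card C"
proof -
  have fin: "finite C" using cover unfolding delta_cover_def by simp
  have "(\<Sum>k<num_columns h. card (sets_meeting_column C \<phi> h k))
      = (\<Sum>S\<in>C. card {k\<in>{..<num_columns h}. \<exists>x\<in>column h k. (x, \<phi> x) \<in> S})"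
    unfolding sets_meeting_column_def by (rule sum_card_filter_swap[OF finite_lessThan fin])
  also have "\<dots> \<le> (\<Sum>S\<in>C. 6)"
  proof (rule sum_mono)
    fix S assume "S \<in> C"
    let ?X = "{x. (x, \<phi> x) \<in> S}"
    have close: "\<forall>x\<in>?X. \<forall>y\<in>?X. dist x y \<le> 2 * h"
    proof (intro ballI)
      fix x y assume "x \<in> ?X" "y \<in> ?X"
      then have "dist (x, \<phi> x) (y, \<phi> y) \<le> 2 * h"
        using delta_cover_dist_le[OF cover \<open>S \<in> C\<close>] by simp
      then show "dist x y \<le> 2 * h" using dist_fst_le[of "(x, \<phi> x)" "(y, \<phi> y)"] by simp
    qed
    note six = card_columns_meeting_le_6[OF \<open>0 < h\<close> close]
    show "card {k\<in>{..<num_columns h}. \<exists>x\<in>column h k. (x, \<phi> x) \<in> S} \<le> 6"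
      by (rule order_trans[OF card_mono[OF six(1)] six(2)]) blast
  qed
  finally show ?thesis by (simp add: mult.commute)
qed

lemma delta_cover_bounds_columns:
  assumes cont: "continuous_on {0..1} \<phi>" and cover: "delta_cover \<delta> (graph01 \<phi>) C" and "0 < \<delta>"
  defines "h \<equiv> \<delta> / 2"
  shows "real (num_columns h) \<le> 6 * real (card C)"
    and "(\<Sum>k<num_columns h. column_osc \<phi> h k) \<le> 12 * \<delta> * real (card C)"
proof -
  have h: "0 < h" using \<open>0 < \<delta>\<close> by (simp add: h_def)
  let ?m = "\<lambda>k. real (card (sets_meeting_column C \<phi> h k))"
  have sum_m: "(\<Sum>k<num_columns h. ?m k) \<le> 6 * real (card C)"
    using sum_card_sets_meeting_column_le[of h \<phi> C] cover h
    unfolding h_def by (simp flip: of_nat_sum)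
  have "real (num_columns h) = (\<Sum>k<num_columns h. 1)" by simp
  also have "\<dots> \<le> (\<Sum>k<num_columns h. ?m k)"
    using card_sets_meeting_column_pos[OF cover h] by (intro sum_mono) (simp add: Suc_le_eq)
  finally show "real (num_columns h) \<le> 6 * real (card C)" using sum_m by linarith
  have "(\<Sum>k<num_columns h. column_osc \<phi> h k) \<le> (\<Sum>k<num_columns h. 2 * \<delta> * ?m k)"
    using column_osc_le_card_sets_meeting_column[OF cont cover \<open>0 < \<delta>\<close> h] by (intro sum_mono) simp
  also have "\<dots> \<le> 2 * \<delta> * (6 * real (card C))"
    using sum_m \<open>0 < \<delta>\<close> by (simp add: sum_distrib_left[symmetric])
  finally show "(\<Sum>k<num_columns h. column_osc \<phi> h k) \<le> 12 * \<delta> * real (card C)" by simp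
qed

lemma column_osc_mult_le:
  assumes cf: "continuous_on {0..1} f" and cg: "continuous_on {0..1} g"
    and "0 < h" "k < num_columns h"
    and A: "\<forall>x\<in>{0..1}. \<bar>g x\<bar> \<le> A" and B: "\<forall>x\<in>{0..1}. \<bar>f x\<bar> \<le> B"
  shows "column_osc (\<lambda>x. f x * g x) h k \<le> A * column_osc f h k + B * column_osc g h k"
proof -
  have "continuous_on {0..1} (\<lambda>x. f x * g x)" using cf cg by (rule continuous_on_mult)
  note fg_image = image_column[OF this assms(3,4)]
  obtain a b where ab: "a \<in> column h k" "b \<in> column h k"
    and "column_min (\<lambda>x. f x * g x) h k = f a * g a" "column_max (\<lambda>x. f x * g x) h k = f b * g b"
    using fg_image by (metis (no_types, lifting) atLeastAtMost_iff image_iff order_refl)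
  then have osc: "column_osc (\<lambda>x. f x * g x) h k = f b * (g b - g a) + g a * (f b - f a)"
    by (simp add: column_osc_def algebra_simps)
  have "\<bar>f b - f a\<bar> \<le> column_osc f h k" "\<bar>g b - g a\<bar> \<le> column_osc g h k"
    using column_bounds[OF cf assms(3,4) ab(1)] column_bounds[OF cf assms(3,4) ab(2)]
      column_bounds[OF cg assms(3,4) ab(1)] column_bounds[OF cg assms(3,4) ab(2)]
    unfolding column_osc_def abs_le_iff by linarith+
  moreover have "a \<in> {0..1}" "b \<in> {0..1}" using ab column_subset_unit_interval[OF assms(3)] by blast+
  ultimately have "\<bar>f b\<bar> * \<bar>g b - g a\<bar> + \<bar>g a\<bar> * \<bar>f b - f a\<bar>
      \<le> B * column_osc g h k + A * column_osc f h k"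
    using A B by (intro add_mono mult_mono) auto
  moreover have "f b * (g b - g a) + g a * (f b - f a) \<le> \<bar>f b\<bar> * \<bar>g b - g a\<bar> + \<bar>g a\<bar> * \<bar>f b - f a\<bar>"
    by (metis abs_ge_self abs_mult add_mono)
  ultimately show ?thesis unfolding osc by linarith
qed

lemma cover_number_graph_le_columns:
  assumes cont: "continuous_on {0..1} \<phi>" and "0 < \<delta>"
  defines "h \<equiv> \<delta> / 2"
  shows "real (cover_number \<delta> (graph01 \<phi>))
    \<le> 2 * real (num_columns h) + (\<Sum>k<num_columns h. column_osc \<phi> h k) / h"
proof -
  have h: "0 < h" using \<open>0 < \<delta>\<close> by (simp add: h_def)
  obtain C where C: "delta_cover \<delta> (graph01 \<phi>) C"
      "card C \<le> (\<Sum>k<num_columns h. nat \<lceil>column_osc \<phi> h k / h\<rceil> + 1)"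
    using graph_column_cover[OF cont \<open>0 < \<delta>\<close>] unfolding h_def by blast
  then have "cover_number \<delta> (graph01 \<phi>) \<le> (\<Sum>k<num_columns h. nat \<lceil>column_osc \<phi> h k / h\<rceil> + 1)"
    using cover_number_le_card[OF C(1)] by linarith
  then have "real (cover_number \<delta> (graph01 \<phi>))
      \<le> real (\<Sum>k<num_columns h. nat \<lceil>column_osc \<phi> h k / h\<rceil> + 1)"
    by (rule of_nat_mono)
  also have "\<dots> = (\<Sum>k<num_columns h. real (nat \<lceil>column_osc \<phi> h k / h\<rceil>) + 1)"
    by (simp add: add.commute)
  also have "\<dots> \<le> (\<Sum>k<num_columns h. column_osc \<phi> h k / h + 2)"
  proof (rule sum_mono)
    fix k assume "k \<in> {..<num_columns h}"
    then have "0 \<le> column_osc \<phi> h k / h"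
      using image_column(2)[OF cont h] h by (simp add: column_osc_def)
    then show "real (nat \<lceil>column_osc \<phi> h k / h\<rceil>) + 1 \<le> column_osc \<phi> h k / h + 2"
      by linarith
  qed
  also have "\<dots> = 2 * real (num_columns h) + (\<Sum>k<num_columns h. column_osc \<phi> h k) / h"
    by (simp add: sum.distrib sum_divide_distrib)
  finally show ?thesis .
qed

lemma cover_number_graph_mult_le:
  assumes cf: "continuous_on {0..1} f" and cg: "continuous_on {0..1} g" and "0 < \<delta>"
    and A: "\<forall>x\<in>{0..1}. \<bar>g x\<bar> \<le> A" "0 \<le> A" and B: "\<forall>x\<in>{0..1}. \<bar>f x\<bar> \<le> B" "0 \<le> B"
  shows "real (cover_number \<delta> (graph01 (\<lambda>x. f x * g x)))
    \<le> (24 * A + 24 * B + 12) * max (real (cover_number \<delta> (graph01 f))) (real (cover_number \<delta> (graph01 g)))"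
    (is "_ \<le> _ * max ?Nf ?Ng")
proof -
  define h where "h = \<delta> / 2"
  have h: "0 < h" using \<open>0 < \<delta>\<close> by (simp add: h_def)
  let ?n = "num_columns h" and ?osc = "\<lambda>\<phi>. \<Sum>k<num_columns h. column_osc \<phi> h k"
  obtain Cf where Cf: "delta_cover \<delta> (graph01 f) Cf" "card Cf = cover_number \<delta> (graph01 f)"
    using graph_column_cover[OF cf \<open>0 < \<delta>\<close>] delta_cover_card_cover_number by blast
  obtain Cg where Cg: "delta_cover \<delta> (graph01 g) Cg" "card Cg = cover_number \<delta> (graph01 g)"
    using graph_column_cover[OF cg \<open>0 < \<delta>\<close>] delta_cover_card_cover_number by blast
  note f_cols = delta_cover_bounds_columns[OF cf Cf(1) \<open>0 < \<delta>\<close>, folded h_def, unfolded Cf(2)]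
  note g_cols = delta_cover_bounds_columns[OF cg Cg(1) \<open>0 < \<delta>\<close>, folded h_def, unfolded Cg(2)]
  have "?osc (\<lambda>x. f x * g x) \<le> (\<Sum>k<?n. A * column_osc f h k + B * column_osc g h k)"
    using column_osc_mult_le[OF cf cg h _ A(1) B(1)] by (intro sum_mono) simp
  also have "\<dots> \<le> A * (12 * \<delta> * ?Nf) + B * (12 * \<delta> * ?Ng)"
    using f_cols(2) g_cols(2) A(2) B(2)
    by (simp add: sum.distrib sum_distrib_left[symmetric] add_mono mult_left_mono)
  finally have "?osc (\<lambda>x. f x * g x) / h \<le> 24 * (A * ?Nf) + 24 * (B * ?Ng)"
    using h by (simp add: divide_le_eq h_def algebra_simps)
  moreover have "A * ?Nf \<le> A * max ?Nf ?Ng" "B * ?Ng \<le> B * max ?Nf ?Ng"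
    using A(2) B(2) by (simp_all add: mult_left_mono)
  moreover have "(24 * A + 24 * B + 12) * max ?Nf ?Ng
      = 24 * (A * max ?Nf ?Ng) + 24 * (B * max ?Nf ?Ng) + 12 * max ?Nf ?Ng"
    by (simp add: algebra_simps)
  ultimately show ?thesis
    using cover_number_graph_le_columns[OF continuous_on_mult[OF cf cg] \<open>0 < \<delta>\<close>, folded h_def]
      f_cols(1) by linarith
qed

lemma ln_le_of_le_mult_max:
  fixes N M1 M2 :: nat and D :: real
  assumes "real N \<le> D * max (real M1) (real M2)" "1 \<le> D"
  shows "ln (real N) \<le> ln D + max (ln (real M1)) (ln (real M2))"
proof (cases "N = 0")
  case True
  \<comment> \<open>here the left side is ln 0 = 0, and logarithms of naturals are nonnegative for the same reason\<close>
  have "0 \<le> ln (real M1)" by (cases "M1 = 0") auto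
  then show ?thesis using True assms(2) by (simp add: le_max_iff_disj)
next
  case False
  then have "0 < D * max (real M1) (real M2)" using assms(1) by linarith
  then have "0 < max (real M1) (real M2)" using assms(2) by (simp add: zero_less_mult_iff)
  have "ln (real N) \<le> ln (D * max (real M1) (real M2))"
    using assms(1) False by (intro ln_mono) auto
  also have "\<dots> = ln D + ln (max (real M1) (real M2))"
    using assms(2) \<open>0 < max (real M1) (real M2)\<close> by (intro ln_mult_pos) auto
  also have "\<dots> \<le> ln D + max (ln (real M1)) (ln (real M2))"
    by (metis add_left_mono max.cobounded1 max.cobounded2 max_def)
  finally show ?thesis .
qed

lemma Limsup_le_max_plus_vanishing:
  fixes r r1 r2 c :: "'a \<Rightarrow> real"
  assumes c: "(c \<longlongrightarrow> 0) F" and le: "eventually (\<lambda>x. r x \<le> c x + max (r1 x) (r2 x)) F"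
  shows "Limsup F (\<lambda>x. ereal (r x)) \<le> max (Limsup F (\<lambda>x. ereal (r1 x))) (Limsup F (\<lambda>x. ereal (r2 x)))"
  unfolding Limsup_le_iff
proof (intro allI impI)
  fix y assume "max (Limsup F (\<lambda>x. ereal (r1 x))) (Limsup F (\<lambda>x. ereal (r2 x))) < y"
  then obtain y' where y': "max (Limsup F (\<lambda>x. ereal (r1 x))) (Limsup F (\<lambda>x. ereal (r2 x))) < y'" "y' < y"
    using dense by blast
  then have ev1: "eventually (\<lambda>x. ereal (r1 x) < y') F" and ev2: "eventually (\<lambda>x. ereal (r2 x) < y') F"
    by (auto intro: Limsup_lessD)
  show "eventually (\<lambda>x. ereal (r x) < y) F"
  proof (cases y)
    case (real b)
    then obtain b' where b': "y' = ereal b'" "b' < b" using y' by (cases y') auto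
    have "eventually (\<lambda>x. c x < b - b') F" using order_tendstoD(2)[OF c] b' by simp
    with le ev1 ev2 show ?thesis
      by eventually_elim (use real b' in auto)
  qed (use y' in auto)
qed

lemma upper_box_dim_le_max:
  fixes F G H :: "'a::metric_space set"
  assumes "1 \<le> D" and "\<And>\<delta>. 0 < \<delta> \<Longrightarrow>
      real (cover_number \<delta> F) \<le> D * max (real (cover_number \<delta> G)) (real (cover_number \<delta> H))"
  shows "upper_box_dim F \<le> max (upper_box_dim G) (upper_box_dim H)"
  unfolding upper_box_dim_def
proof (rule Limsup_le_max_plus_vanishing)
  show "((\<lambda>\<delta>. ln D / - ln \<delta>) \<longlongrightarrow> 0) (at_right 0)"
    by (intro tendsto_divide_0[OF tendsto_const] filterlim_at_top_imp_at_infinity)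
       (simp add: filterlim_uminus_at_top ln_at_0)
  have "eventually (\<lambda>\<delta>. 0 < \<delta> \<and> \<delta> < (1::real)) (at_right 0)"
    unfolding eventually_at_right_field by (intro exI[of _ 1]) auto
  then show "eventually (\<lambda>\<delta>. ln (real (cover_number \<delta> F)) / - ln \<delta> \<le> ln D / - ln \<delta>
      + max (ln (real (cover_number \<delta> G)) / - ln \<delta>) (ln (real (cover_number \<delta> H)) / - ln \<delta>)) (at_right 0)"
  proof (rule eventually_mono)
    fix \<delta> :: real assume \<delta>: "0 < \<delta> \<and> \<delta> < 1"
    then have "0 \<le> - ln \<delta>" by simp
    from divide_right_mono[OF ln_le_of_le_mult_max[OF assms(2) assms(1)] this] \<delta>
    show "ln (real (cover_number \<delta> F)) / - ln \<delta> \<le> ln D / - ln \<delta>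
      + max (ln (real (cover_number \<delta> G)) / - ln \<delta>) (ln (real (cover_number \<delta> H)) / - ln \<delta>)"
      by (simp only: add_divide_distrib max_divide_distrib_right if_P[OF \<open>0 \<le> - ln \<delta>\<close>])
  qed
qed

theorem lemma3p1:
  fixes f g :: "real \<Rightarrow> real"
  assumes "continuous_on {0..1} f" and "continuous_on {0..1} g"
  shows "upper_box_dim (graph01 (\<lambda>x. f x * g x))
           \<le> max (upper_box_dim (graph01 f)) (upper_box_dim (graph01 g))"
proof -
  have "bounded (f ` {0..1})" "bounded (g ` {0..1})"
    using assms by (auto intro: compact_imp_bounded compact_continuous_image)
  then obtain A B where "0 < A" "\<forall>x\<in>{0..1}. \<bar>g x\<bar> \<le> A" "0 < B" "\<forall>x\<in>{0..1}. \<bar>f x\<bar> \<le> B"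
    unfolding bounded_pos by auto
  then show ?thesis
    using cover_number_graph_mult_le[OF assms] by (intro upper_box_dim_le_max[of "24 * A + 24 * B + 12"]) auto
qed

end
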